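(* Let $m\ge 1$ be an integer, let $a_0\ge 0$, $a>0$, $b>0$, $C_0>0$, $L\ge 0$, $M>0$, and put $$\bar\Gamma=\{(x,Y):\ x\in[a_0,a_0+a],\ Y\in\mathbb{R}^m,\ |Y|_2\le b+C_0\}.$$ Let $\mathcal F$ be a class of functions $f:\bar\Gamma\to\mathbb{R}$ such that every $f\in\mathcal F$ is continuous on $\bar\Gamma$, satisfies $\max_{(x,Y)\in\bar\Gamma}|f(x,Y)|\le M$, and satisfies the Lipschitz condition $|f(x,Y)-f(x,\tilde Y)|\le L|Y-\tilde Y|_2$ for all $(x,Y),(x,\tilde Y)\in\bar\Gamma$. Let $\alpha=\min\{a,b/M\}$. Consider the ODE $$y^{(m)}(x)=f\big(x,y(x),y'(x),\dots,y^{(m-1)}(x)\big),\qquad (y(a_0),y'(a_0),\dots,y^{(m-1)}(a_0))=Y_0,$$ and assume that for every $f\in\mathcal F$ and every $Y_0\in\mathbb{R}^m$ with $|Y_0|_2\le C_0$ it has a solution on $[a_0,a_0+\alpha]$ with $(x,Y(x))\in\bar\Gamma$ for all $x\in[a_0,a_0+\alpha]$, where $Y(x)=(y(x),y'(x),\dots,y^{(m-1)}(x))$. Let $\mathcal Y_0$ be the class of all such solutions $y$ on $[a_0,a_0+\alpha]$ (with $f$ ranging over $\mathcal F$ and $Y_0$ over $\{|Y_0|_2\le C_0\}$), and for $0\le k\le m-1$ let $\mathcal Y_k=\{y^{(k)}:y\in\mathcal Y_0\}$. Define $$L_{\max}=\sup_{x\in[a_0,a_0+\alpha]}\Big\{\exp\big(x\sqrt{L^2+1}\big)\Big[1+\int_0^x\exp\big(-s\sqrt{L^2+1}\big)ds\Big]\Big\}.$$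 Then for every $\delta>0$ and every $k\in\{0,\dots,m-1\}$, $$\log N_\infty(\delta,\mathcal Y_k)\le \log N_\infty\Big(\frac{\delta}{L_{\max}},\mathcal F\Big)+m\log\Big(\frac{2C_0L_{\max}}{\delta}+1\Big),$$ where $N_\infty(\cdot,\mathcal F)$ is taken with respect to the supremum metric on $\bar\Gamma$ and $N_\infty(\cdot,\mathcal Y_k)$ with respect to the supremum metric on $[a_0,a_0+\alpha]$.
   Context: Covering number: for a set $\mathbb T$ with metric $\rho$, a set $\{t^1,\dots,t^N\}\subset\mathbb T$ is a $\delta$-cover if every $t\in\mathbb T$ has some $i$ with $\rho(t,t^i)\le\delta$; $N_\rho(\delta;\mathbb T)$ is the smallest cardinality of a $\delta$-cover. $N_\infty$ denotes the covering number with respect to the supremum metric $|f-g|_\infty=\sup|f-g|$ over the relevant domain. $|\cdot|_2$ is the Euclidean norm. *)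

theory Defs
  imports "HOL-Analysis.Analysis"
begin

text \<open>Vectors of R^m are represented as functions nat => real that vanish at indices >= m.\<close>

definition in_Rm :: "nat \<Rightarrow> (nat \<Rightarrow> real) \<Rightarrow> bool" where
  "in_Rm m Y \<longleftrightarrow> (\<forall>i\<ge>m. Y i = 0)"

definition vnorm :: "nat \<Rightarrow> (nat \<Rightarrow> real) \<Rightarrow> real" where
  "vnorm m Y = sqrt (\<Sum>i<m. (Y i)^2)"

definition Gamma_bar :: "nat \<Rightarrow> real \<Rightarrow> real \<Rightarrow> real \<Rightarrow> real \<Rightarrow> (real \<times> (nat \<Rightarrow> real)) set" where
  "Gamma_bar m a0 a b C0 = {(x, Y). x \<in> {a0..a0+a} \<and> in_Rm m Y \<and> vnorm m Y \<le> b + C0}"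

definition vec_of :: "nat \<Rightarrow> (nat \<Rightarrow> real \<Rightarrow> real) \<Rightarrow> real \<Rightarrow> (nat \<Rightarrow> real)" where
  "vec_of m D x = (\<lambda>i. if i < m then D i x else 0)"

text \<open>D is the family of derivatives y = D 0, y' = D 1, ..., y^(m) = D m of a solution on
  the interval I = [a0, a0+al] of y^(m)(x) = f(x, Y(x)), Y(a0) = Y0; derivatives at the
  endpoints are one-sided (taken within I).\<close>
definition is_solution ::
  "nat \<Rightarrow> (real \<times> (nat \<Rightarrow> real) \<Rightarrow> real) \<Rightarrow> (nat \<Rightarrow> real) \<Rightarrow> real \<Rightarrow> real \<Rightarrow> (nat \<Rightarrow> real \<Rightarrow> real) \<Rightarrow> bool" where
  "is_solution m f Y0 a0 al D \<longleftrightarrow>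
     (\<forall>k<m. \<forall>x\<in>{a0..a0+al}. (D k has_real_derivative D (Suc k) x) (at x within {a0..a0+al})) \<and>
     (\<forall>x\<in>{a0..a0+al}. D m x = f (x, vec_of m D x)) \<and>
     (\<forall>k<m. D k a0 = Y0 k)"

text \<open>Covering number w.r.t. the supremum metric over the domain S (infinity if no finite cover).\<close>
definition covnum :: "real \<Rightarrow> ('a \<Rightarrow> real) set \<Rightarrow> 'a set \<Rightarrow> enat" where
  "covnum \<delta> T S =
     (INF C \<in> {C. finite C \<and> C \<subseteq> T \<and> (\<forall>t\<in>T. \<exists>c\<in>C. (SUP x\<in>S. ereal \<bar>t x - c x\<bar>) \<le> ereal \<delta>)}.
        enat (card C))"

definition Lmax :: "real \<Rightarrow> real \<Rightarrow> real \<Rightarrow> real" where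
  "Lmax L a0 al = (SUP x\<in>{a0..a0+al}.
      exp (x * sqrt (L^2 + 1)) * (1 + integral {0..x} (\<lambda>s. exp (- s * sqrt (L^2 + 1)))))"

end

(*
  Two solutions whose right-hand sides are r-close in the supremum norm on Gamma-bar and whose
  initial vectors are r-close stay close: the difference Z of their state vectors
  (y, y', ..., y^(m-1)) satisfies |Z'| <= sqrt (L^2 + 1) |Z| + r, so Gronwall's inequality bounds
  |Z(x)| on [a0, a0 + alpha] by r times the quantity L_max.  Taking r = delta / L_max, one solution
  for each pair from an r-cover of F and an r-net of the ball of initial values of radius C0 is
  a delta-cover of every class Y_k.  A volume comparison of disjoint balls of radius r/2 shows that
  the ball of radius C0 has an r-net with at most (2 C0 / r + 1)^m points.
*)

theory Submission
  imports Defs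
begin

lemma vnorm_eq_L2_set: "vnorm m Y = L2_set Y {..<m}"
  by (simp add: vnorm_def L2_set_def)

lemma vnorm_nonneg: "0 \<le> vnorm m Y"
  by (simp add: vnorm_eq_L2_set)

lemma vnorm_diff_commute: "vnorm m (\<lambda>i. x i - y i) = vnorm m (\<lambda>i. y i - x i)"
  by (simp add: vnorm_def power2_commute)

lemma vnorm_diff_triangle:
  "vnorm m (\<lambda>i. x i - z i) \<le> vnorm m (\<lambda>i. x i - y i) + vnorm m (\<lambda>i. y i - z i)"
  using L2_set_triangle_ineq[of "\<lambda>i. x i - y i" "\<lambda>i. y i - z i" "{..<m}"]
  by (simp add: vnorm_eq_L2_set)

lemma abs_le_vnorm:
  assumes "k < m"
  shows "\<bar>Y k\<bar> \<le> vnorm m Y"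
proof -
  have "(Y k)\<^sup>2 \<le> (\<Sum>i<m. (Y i)\<^sup>2)"
    using assms by (intro member_le_sum) auto
  then show ?thesis
    using real_sqrt_le_mono by (fastforce simp: vnorm_def)
qed

abbreviation lborel_Rm :: "nat \<Rightarrow> (nat \<Rightarrow> real) measure" where
  "lborel_Rm m \<equiv> PiM {..<m} (\<lambda>_. lborel)"

definition cball_Rm :: "nat \<Rightarrow> (nat \<Rightarrow> real) \<Rightarrow> real \<Rightarrow> (nat \<Rightarrow> real) set" where
  "cball_Rm m c r = {x \<in> space (lborel_Rm m). vnorm m (\<lambda>i. x i - c i) \<le> r}"

lemma distr_PiM_lborel_translate:
  fixes c :: "'i \<Rightarrow> real"
  assumes "finite I"
  shows "distr (PiM I (\<lambda>_. lborel)) (PiM I (\<lambda>_. lborel)) (\<lambda>x. \<lambda>i\<in>I. c i + x i) = PiM I (\<lambda>_. lborel)"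
proof -
  interpret product_sigma_finite "\<lambda>_. lborel :: real measure" ..
  have T: "(\<lambda>x. \<lambda>i\<in>I. c i + x i) \<in> PiM I (\<lambda>_. lborel) \<rightarrow>\<^sub>M PiM I (\<lambda>_. lborel :: real measure)"
    by measurable
  show ?thesis
  proof (rule PiM_eqI[OF assms])
    fix A assume A: "\<And>i. i \<in> I \<Longrightarrow> A i \<in> sets (lborel :: real measure)"
    have "(\<lambda>x. \<lambda>i\<in>I. c i + x i) -` Pi\<^sub>E I A \<inter> space (PiM I (\<lambda>_. lborel))
        = Pi\<^sub>E I (\<lambda>i. (+) (c i) -` A i)"
      by (auto simp: space_PiM PiE_def Pi_def extensional_def)
    moreover have "emeasure lborel ((+) (c i) -` A i) = emeasure lborel (A i)" if "i \<in> I" for i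
      using emeasure_distr[of "(+) (c i)" lborel borel "A i"] A[OF that] lborel_distr_plus[of "c i"]
      by simp
    moreover have "(+) (c i) -` A i \<in> sets lborel" if "i \<in> I" for i
      using measurable_sets_borel[OF _ A[OF that], of "(+) (c i)"] by simp
    ultimately show "emeasure (distr (PiM I (\<lambda>_. lborel)) (PiM I (\<lambda>_. lborel)) (\<lambda>x. \<lambda>i\<in>I. c i + x i)) (Pi\<^sub>E I A)
        = (\<Prod>i\<in>I. emeasure lborel (A i))"
      using A assms T by (simp add: emeasure_distr sets_PiM_I_finite emeasure_PiM)
  qed simp
qed

lemma emeasure_cball_Rm:
  assumes "r > 0"
  shows "emeasure (lborel_Rm m) (cball_Rm m c r) = ennreal (unit_ball_vol (real m) * r ^ m)"
proof -
  let ?T = "\<lambda>x. \<lambda>i\<in>{..<m}. c i + x i"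
  have T: "?T \<in> lborel_Rm m \<rightarrow>\<^sub>M lborel_Rm m"
    by measurable
  have "?T -` cball_Rm m c r \<inter> space (lborel_Rm m)
      = {f. sqrt (\<Sum>i\<in>{..<m}. (f i)\<^sup>2) \<le> r} \<inter> space (lborel_Rm m)"
    by (auto simp: cball_Rm_def vnorm_def space_PiM)
  then have "emeasure (lborel_Rm m) (cball_Rm m c r)
      = emeasure (lborel_Rm m) ({f. sqrt (\<Sum>i\<in>{..<m}. (f i)\<^sup>2) \<le> r} \<inter> space (lborel_Rm m))"
    using emeasure_distr[OF T, of "cball_Rm m c r"] distr_PiM_lborel_translate[of "{..<m}" c]
    by (simp add: cball_Rm_def vnorm_def)
  also have "\<dots> = ennreal (unit_ball_vol (real m) * r ^ m)"
    using emeasure_cball_aux[of "{..<m}" r] assms by simp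
  finally show ?thesis .
qed

lemma card_separated_le:
  fixes P :: "(nat \<Rightarrow> real) set"
  assumes r: "r > 0" and R: "R \<ge> 0" and "finite P" and P: "P \<subseteq> {Y. vnorm m Y \<le> R}"
    and sep: "\<forall>p\<in>P. \<forall>q\<in>P. p \<noteq> q \<longrightarrow> r < vnorm m (\<lambda>i. p i - q i)"
  shows "real (card P) \<le> (2 * R / r + 1) ^ m"
proof -
  define h where "h = r / 2"
  define V where "V = unit_ball_vol (real m)"
  have h: "h > 0" and V: "V > 0"
    using r by (simp_all add: h_def V_def)
  have balls_sets: "cball_Rm m c \<rho> \<in> sets (lborel_Rm m)" for c \<rho>
    unfolding cball_Rm_def vnorm_def by measurable
  have "disjoint_family_on (\<lambda>p. cball_Rm m p h) P"
    unfolding disjoint_family_on_def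
  proof (intro ballI impI)
    fix p q assume "p \<in> P" "q \<in> P" "p \<noteq> q"
    then have "r < vnorm m (\<lambda>i. p i - q i)" using sep by blast
    moreover have "vnorm m (\<lambda>i. p i - q i) \<le> h + h" if "x \<in> cball_Rm m p h" "x \<in> cball_Rm m q h" for x
      using that vnorm_diff_triangle[of m p q x] vnorm_diff_commute[of m p x]
      by (simp add: cball_Rm_def)
    ultimately show "cball_Rm m p h \<inter> cball_Rm m q h = {}"
      by (force simp: h_def)
  qed
  moreover have "(\<Union>p\<in>P. cball_Rm m p h) \<subseteq> cball_Rm m (\<lambda>_. 0) (R + h)"
  proof (clarsimp simp: cball_Rm_def)
    fix p x assume "p \<in> P" "vnorm m (\<lambda>i. x i - p i) \<le> h"
    then show "vnorm m x \<le> R + h"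
      using P vnorm_diff_triangle[of m x "\<lambda>_. 0" p] by auto
  qed
  ultimately have "(\<Sum>p\<in>P. emeasure (lborel_Rm m) (cball_Rm m p h))
      \<le> emeasure (lborel_Rm m) (cball_Rm m (\<lambda>_. 0) (R + h))"
    using \<open>finite P\<close> balls_sets
    by (subst sum_emeasure) (auto intro: emeasure_mono)
  then have "ennreal (real (card P) * (V * h ^ m)) \<le> ennreal (V * (R + h) ^ m)"
    using h R by (simp add: emeasure_cball_Rm V_def ennreal_of_nat_eq_real_of_nat ennreal_mult')
  then have "real (card P) * h ^ m * V \<le> (R + h) ^ m * V"
    using h R V by (simp add: ennreal_le_iff mult_ac)
  then have "real (card P) \<le> ((R + h) / h) ^ m"
    using h V by (simp add: power_divide le_divide_eq)
  also have "(R + h) / h = 2 * R / r + 1"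
    using r by (simp add: h_def field_simps)
  finally show ?thesis .
qed

text \<open>A maximal \<open>r\<close>-separated subset of \<open>B\<close> is an \<open>r\<close>-net of \<open>B\<close>.\<close>
lemma bounded_set_has_small_cover:
  fixes B :: "(nat \<Rightarrow> real) set"
  assumes r: "r > 0" and R: "R \<ge> 0" and B: "B \<subseteq> {Y. vnorm m Y \<le> R}"
  shows "\<exists>P. finite P \<and> P \<subseteq> B \<and> (\<forall>Y\<in>B. \<exists>c\<in>P. vnorm m (\<lambda>i. Y i - c i) \<le> r)
             \<and> real (card P) \<le> (2 * R / r + 1) ^ m"
proof -
  define separated where "separated P \<longleftrightarrow> finite P \<and> P \<subseteq> B \<and>
      (\<forall>p\<in>P. \<forall>q\<in>P. p \<noteq> q \<longrightarrow> r < vnorm m (\<lambda>i. p i - q i))" for P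
  have card_le: "real (card P) \<le> (2 * R / r + 1) ^ m" if "separated P" for P
    using that B by (intro card_separated_le[OF r R]) (auto simp: separated_def)
  have "card P < Suc (nat \<lceil>(2 * R / r + 1) ^ m\<rceil>)" if "separated P" for P
    using card_le[OF that] by linarith
  moreover have "separated {}"
    by (simp add: separated_def)
  ultimately obtain P where P: "separated P" and max: "\<And>Q. separated Q \<Longrightarrow> card Q \<le> card P"
    using ex_has_greatest_nat[of separated "{}" card] by metis
  have "\<exists>c\<in>P. vnorm m (\<lambda>i. Y i - c i) \<le> r" if "Y \<in> B" for Y
  proof (rule ccontr)
    assume "\<not> ?thesis"
    then have far: "\<forall>c\<in>P. r < vnorm m (\<lambda>i. Y i - c i)" by auto
    then have "Y \<notin> P"
      using r by (force simp: vnorm_def)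
    have "separated (insert Y P)"
      using P far \<open>Y \<in> B\<close> vnorm_diff_commute[of m Y] by (auto simp: separated_def)
    then have "card (insert Y P) \<le> card P"
      by (rule max)
    then have "Suc (card P) \<le> card P"
      using \<open>Y \<notin> P\<close> P by (simp add: separated_def)
    then show False by simp
  qed
  then show ?thesis
    using P card_le[OF P] by (auto simp: separated_def)
qed

lemma gronwall_linear:
  fixes g g' :: "real \<Rightarrow> real"
  assumes K: "K > 0" and "a \<le> b"
    and g: "\<And>y. y \<in> {a..b} \<Longrightarrow> (g has_real_derivative g' y) (at y within {a..b})"
    and g'_le: "\<And>y. y \<in> {a..b} \<Longrightarrow> g' y \<le> K * g y + \<epsilon>"
  shows "g b \<le> exp (K * (b - a)) * (g a + \<epsilon> / K) - \<epsilon> / K"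
proof -
  define h where "h y = exp (- K * (y - a)) * (g y + \<epsilon> / K)" for y
  have h: "(h has_real_derivative exp (- K * (y - a)) * (g' y - K * g y - \<epsilon>)) (at y within {a..b})"
    if "y \<in> {a..b}" for y
    unfolding h_def using K g[OF that]
    by (auto intro!: derivative_eq_intros simp: field_simps)
  have "h b \<le> h a"
  proof (rule DERIV_nonpos_imp_decreasing_open[OF \<open>a \<le> b\<close>])
    fix y assume "a < y" "y < b"
    then show "\<exists>z. (h has_real_derivative z) (at y) \<and> z \<le> 0"
      using h[of y] g'_le[of y] by (auto simp: at_within_Icc_at intro!: mult_nonneg_nonpos)
  next
    show "continuous_on {a..b} h"
      using DERIV_continuous[OF h] by (auto simp: continuous_on_eq_continuous_within)
  qed
  then have "exp (- K * (b - a)) * (g b + \<epsilon> / K) \<le> g a + \<epsilon> / K"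
    by (simp add: h_def)
  then have "exp (K * (b - a)) * (exp (- K * (b - a)) * (g b + \<epsilon> / K)) \<le> exp (K * (b - a)) * (g a + \<epsilon> / K)"
    by (rule mult_left_mono) simp
  then have "g b + \<epsilon> / K \<le> exp (K * (b - a)) * (g a + \<epsilon> / K)"
    by (simp add: mult.assoc[symmetric] exp_add[symmetric])
  then show ?thesis by simp
qed

text \<open>The Euclidean norm need not be differentiable at zero, so the scalar inequality is
  applied to the smoothed norm \<open>sqrt (|Z|\<^sup>2 + \<eta>\<^sup>2)\<close> and \<open>\<eta>\<close> is let tend to zero.\<close>
lemma gronwall_vnorm:
  fixes Z Z' :: "nat \<Rightarrow> real \<Rightarrow> real"
  assumes K: "K > 0" and "a \<le> b"
    and Z: "\<And>i y. i < m \<Longrightarrow> y \<in> {a..b} \<Longrightarrow> (Z i has_real_derivative Z' i y) (at y within {a..b})"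
    and Z'_le: "\<And>y. y \<in> {a..b} \<Longrightarrow> vnorm m (\<lambda>i. Z' i y) \<le> K * vnorm m (\<lambda>i. Z i y) + \<epsilon>"
  shows "vnorm m (\<lambda>i. Z i b) \<le> exp (K * (b - a)) * (vnorm m (\<lambda>i. Z i a) + \<epsilon> / K) - \<epsilon> / K"
proof -
  define E where "E = exp (K * (b - a))"
  define N where "N y = vnorm m (\<lambda>i. Z i y)" for y
  have smoothed: "N b \<le> E * (N a + \<epsilon> / K) - \<epsilon> / K + E * \<eta>" if "\<eta> > 0" for \<eta>
  proof -
    define S where "S y = (\<Sum>i<m. (Z i y)\<^sup>2) + \<eta>\<^sup>2" for y
    define g where "g y = sqrt (S y)" for y
    define g' where "g' y = (\<Sum>i<m. Z i y * Z' i y) / g y" for y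
    have S_pos: "S y > 0" for y
      using \<open>\<eta> > 0\<close> by (simp add: S_def add_nonneg_pos sum_nonneg)
    then have g_pos: "g y > 0" for y
      by (simp add: g_def)
    have N_le_g: "N y \<le> g y" for y
      unfolding N_def vnorm_def g_def S_def by (simp add: sum_nonneg)
    have "(g has_real_derivative g' y) (at y within {a..b})" if "y \<in> {a..b}" for y
    proof -
      have "(S has_real_derivative (\<Sum>i<m. 2 * Z i y * Z' i y)) (at y within {a..b})"
        unfolding S_def[abs_def] using Z[OF _ that] by (auto intro!: derivative_eq_intros simp: mult_ac)
      from DERIV_chain2[OF DERIV_real_sqrt[OF S_pos] this]
      show ?thesis
        unfolding g_def[abs_def] g'_def by (simp add: sum_distrib_left sum_divide_distrib field_simps mult.assoc)
    qed
    moreover have "g' y \<le> K * g y + \<epsilon>" if "y \<in> {a..b}" for y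
    proof -
      have "(\<Sum>i<m. Z i y * Z' i y) \<le> (\<Sum>i<m. \<bar>Z i y\<bar> * \<bar>Z' i y\<bar>)"
        by (intro sum_mono) (simp add: abs_mult[symmetric])
      also have "\<dots> \<le> N y * vnorm m (\<lambda>i. Z' i y)"
        unfolding N_def vnorm_eq_L2_set by (rule L2_set_mult_ineq)
      also have "\<dots> \<le> g y * vnorm m (\<lambda>i. Z' i y)"
        by (intro mult_right_mono N_le_g vnorm_nonneg)
      finally have "g' y \<le> vnorm m (\<lambda>i. Z' i y)"
        using g_pos[of y] by (simp add: g'_def divide_le_eq mult.commute)
      also have "\<dots> \<le> K * g y + \<epsilon>"
        using Z'_le[OF that] N_le_g[of y] K unfolding N_def by (smt (verit) mult_left_mono)
      finally show ?thesis .
    qed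
    ultimately have "g b \<le> E * (g a + \<epsilon> / K) - \<epsilon> / K"
      unfolding E_def by (rule gronwall_linear[OF K \<open>a \<le> b\<close>])
    moreover have "g a \<le> N a + \<eta>"
      using sqrt_add_le_add_sqrt[of "\<Sum>i<m. (Z i a)\<^sup>2" "\<eta>\<^sup>2"] \<open>\<eta> > 0\<close>
      by (simp add: g_def S_def N_def vnorm_def sum_nonneg)
    ultimately show ?thesis
      using N_le_g[of b] by (smt (verit) E_def exp_gt_zero mult_left_mono distrib_left)
  qed
  have "N b \<le> E * (N a + \<epsilon> / K) - \<epsilon> / K + t" if "t > 0" for t
    using smoothed[of "t / E"] that by (simp add: E_def)
  then show ?thesis
    unfolding N_def E_def by (rule field_le_epsilon)
qed

text \<open>The derivative of the state vector V = (y, y', ..., y^(m-1)) is its shift W, whose last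
  entry y^(m) = f(x, V) is controlled through the Lipschitz condition.\<close>
lemma vnorm_shift_le:
  fixes V W :: "nat \<Rightarrow> real"
  assumes "m = Suc n" and "L \<ge> 0" and "r \<ge> 0"
    and shift: "\<And>i. i < n \<Longrightarrow> W i = V (Suc i)"
    and last: "\<bar>W n\<bar> \<le> L * vnorm m V + r"
  shows "vnorm m W \<le> sqrt (L\<^sup>2 + 1) * vnorm m V + r"
proof -
  define K where "K = sqrt (L\<^sup>2 + 1)"
  define v where "v = vnorm m V"
  have "v \<ge> 0" "K\<^sup>2 = L\<^sup>2 + 1" and "L \<le> K"
    by (simp_all add: v_def vnorm_nonneg K_def real_le_rsqrt)
  have "(\<Sum>i<n. (W i)\<^sup>2) = (\<Sum>i<n. (V (Suc i))\<^sup>2)"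
    using shift by simp
  also have "\<dots> \<le> (\<Sum>i<m. (V i)\<^sup>2)"
    unfolding \<open>m = Suc n\<close> sum.lessThan_Suc_shift by simp
  also have "\<dots> = v\<^sup>2"
    by (simp add: v_def vnorm_def sum_nonneg)
  finally have "(\<Sum>i<m. (W i)\<^sup>2) \<le> v\<^sup>2 + (L * v + r)\<^sup>2"
    using \<open>m = Suc n\<close> last power_mono[OF last abs_ge_zero, of 2]
    by (simp add: v_def)
  also have "\<dots> \<le> (K * v + r)\<^sup>2"
    using \<open>K\<^sup>2 = L\<^sup>2 + 1\<close> \<open>L \<le> K\<close> \<open>v \<ge> 0\<close> \<open>r \<ge> 0\<close> mult_right_mono[OF \<open>L \<le> K\<close>, of "v * r"]
    by (simp add: power2_sum power_mult_distrib algebra_simps)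
  finally have "vnorm m W \<le> sqrt ((K * v + r)\<^sup>2)"
    unfolding vnorm_def by (rule real_sqrt_le_mono)
  then show ?thesis
    using \<open>v \<ge> 0\<close> \<open>r \<ge> 0\<close> by (simp add: v_def K_def)
qed

lemma solution_dist_le:
  fixes G :: "(real \<times> (nat \<Rightarrow> real)) set" and f f' :: "real \<times> (nat \<Rightarrow> real) \<Rightarrow> real"
    and L :: real
  defines "K \<equiv> sqrt (L\<^sup>2 + 1)"
  assumes "m \<ge> 1" and "L \<ge> 0" and "r \<ge> 0"
    and lip: "\<forall>x Y Y'. (x, Y) \<in> G \<longrightarrow> (x, Y') \<in> G \<longrightarrow>
                \<bar>f (x, Y) - f (x, Y')\<bar> \<le> L * vnorm m (\<lambda>i. Y i - Y' i)"
    and close: "\<forall>p\<in>G. \<bar>f p - f' p\<bar> \<le> r"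
    and D: "is_solution m f Y0 a0 al D" and D': "is_solution m f' Y0' a0 al D'"
    and graph: "\<forall>x\<in>{a0..a0+al}. (x, vec_of m D x) \<in> G"
    and graph': "\<forall>x\<in>{a0..a0+al}. (x, vec_of m D' x) \<in> G"
    and init: "vnorm m (\<lambda>i. Y0 i - Y0' i) \<le> r"
    and x: "x \<in> {a0..a0+al}"
  shows "vnorm m (\<lambda>i. D i x - D' i x) \<le> exp (K * (x - a0)) * (r + r / K) - r / K"
proof -
  define Z where "Z i y = D i y - D' i y" for i y
  have "K > 0"
    by (simp add: K_def add_nonneg_pos)
  obtain n where "m = Suc n"
    using \<open>m \<ge> 1\<close> by (cases m) auto
  have Z: "(Z i has_real_derivative Z (Suc i) y) (at y within {a0..x})"
    if "i < m" "y \<in> {a0..x}" for i y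
  proof -
    have "(Z i has_real_derivative Z (Suc i) y) (at y within {a0..a0+al})"
      using D D' that x unfolding is_solution_def Z_def by (intro DERIV_diff) auto
    then show ?thesis
      by (rule DERIV_subset) (use x in auto)
  qed
  have "vnorm m (\<lambda>i. Z (Suc i) y) \<le> K * vnorm m (\<lambda>i. Z i y) + r" if "y \<in> {a0..x}" for y
    unfolding K_def
  proof (rule vnorm_shift_le[OF \<open>m = Suc n\<close> \<open>L \<ge> 0\<close> \<open>r \<ge> 0\<close>])
    have y: "y \<in> {a0..a0+al}"
      using that x by auto
    have "\<bar>f (y, vec_of m D y) - f (y, vec_of m D' y)\<bar> \<le> L * vnorm m (\<lambda>i. vec_of m D y i - vec_of m D' y i)"
      using lip graph graph' y by blast
    also have "vnorm m (\<lambda>i. vec_of m D y i - vec_of m D' y i) = vnorm m (\<lambda>i. Z i y)"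
      by (simp add: vnorm_def vec_of_def Z_def)
    finally have "\<bar>f (y, vec_of m D y) - f (y, vec_of m D' y)\<bar> \<le> L * vnorm m (\<lambda>i. Z i y)" .
    moreover have "\<bar>f (y, vec_of m D' y) - f' (y, vec_of m D' y)\<bar> \<le> r"
      using close graph' y by blast
    moreover have "Z (Suc n) y = f (y, vec_of m D y) - f' (y, vec_of m D' y)"
      using D D' y \<open>m = Suc n\<close> by (simp add: is_solution_def Z_def)
    ultimately show "\<bar>Z (Suc n) y\<bar> \<le> L * vnorm m (\<lambda>i. Z i y) + r"
      by linarith
  qed simp
  then have "vnorm m (\<lambda>i. Z i x) \<le> exp (K * (x - a0)) * (vnorm m (\<lambda>i. Z i a0) + r / K) - r / K"
    using x by (intro gronwall_vnorm[OF \<open>K > 0\<close> _ Z]) auto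
  also have "vnorm m (\<lambda>i. Z i a0) = vnorm m (\<lambda>i. Y0 i - Y0' i)"
    using D D' by (simp add: is_solution_def Z_def vnorm_def)
  also have "exp (K * (x - a0)) * (vnorm m (\<lambda>i. Y0 i - Y0' i) + r / K) \<le> exp (K * (x - a0)) * (r + r / K)"
    using init by (intro mult_left_mono) auto
  finally show ?thesis
    by (simp add: Z_def)
qed

lemma integral_exp_neg:
  fixes K x :: real
  assumes "K > 0" and "x \<ge> 0"
  shows "integral {0..x} (\<lambda>s. exp (- s * K)) = (1 - exp (- x * K)) / K"
proof -
  have "((\<lambda>s. exp (- s * K)) has_integral (- exp (- x * K) / K - - exp (- 0 * K) / K)) {0..x}"
  proof (rule fundamental_theorem_of_calculus[OF \<open>x \<ge> 0\<close>])
    fix s assume "s \<in> {0..x}"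
    have "((\<lambda>s. - exp (- s * K) / K) has_real_derivative exp (- s * K)) (at s within {0..x})"
      using \<open>K > 0\<close> by (auto intro!: derivative_eq_intros)
    then show "((\<lambda>s. - exp (- s * K) / K) has_vector_derivative exp (- s * K)) (at s within {0..x})"
      by (simp add: has_real_derivative_iff_has_vector_derivative)
  qed
  then show ?thesis
    by (simp add: integral_unique diff_divide_distrib)
qed

lemma Lmax_eq:
  fixes L :: real
  defines "K \<equiv> sqrt (L\<^sup>2 + 1)"
  assumes "a0 \<ge> 0" and "al \<ge> 0"
  shows "Lmax L a0 al = exp ((a0 + al) * K) * (1 + 1 / K) - 1 / K"
proof -
  have "K > 0"
    by (simp add: K_def add_nonneg_pos)
  define \<phi> where "\<phi> x = exp (x * K) * (1 + 1 / K) - 1 / K" for x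
  have "exp (x * K) * (1 + integral {0..x} (\<lambda>s. exp (- s * K))) = \<phi> x" if "x \<ge> 0" for x
  proof -
    have "exp (x * K) * (1 + integral {0..x} (\<lambda>s. exp (- s * K)))
        = exp (x * K) * (1 + 1 / K) - exp (x * K) * exp (- x * K) / K"
      unfolding integral_exp_neg[OF \<open>K > 0\<close> that] by (simp add: algebra_simps diff_divide_distrib)
    also have "exp (x * K) * exp (- x * K) = 1"
      by (simp flip: exp_add)
    finally show ?thesis
      by (simp add: \<phi>_def)
  qed
  then have "Lmax L a0 al = Sup (\<phi> ` {a0..a0+al})"
    unfolding Lmax_def K_def[symmetric] using \<open>a0 \<ge> 0\<close> by (intro arg_cong[where f=Sup] image_cong) auto
  also have "\<dots> = \<phi> (a0 + al)"
    using \<open>al \<ge> 0\<close> \<open>K > 0\<close>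
    by (intro cSup_eq_maximum) (auto simp: \<phi>_def intro!: mult_right_mono)
  finally show ?thesis
    by (simp add: \<phi>_def)
qed

lemma one_le_Lmax:
  assumes "a0 \<ge> 0" and "al \<ge> 0"
  shows "1 \<le> Lmax L a0 al"
proof -
  define K where "K = sqrt (L\<^sup>2 + 1)"
  have "K > 0"
    by (simp add: K_def add_nonneg_pos)
  have "1 * (1 + 1 / K) \<le> exp ((a0 + al) * K) * (1 + 1 / K)"
    using assms \<open>K > 0\<close> by (intro mult_right_mono) auto
  then show ?thesis
    using assms by (simp add: Lmax_eq K_def)
qed

lemma growth_le_Lmax:
  fixes L :: real
  defines "K \<equiv> sqrt (L\<^sup>2 + 1)"
  assumes "a0 \<ge> 0" and "r \<ge> 0" and "x \<in> {a0..a0+al}"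
  shows "exp (K * (x - a0)) * (r + r / K) - r / K \<le> r * Lmax L a0 al"
proof -
  have "K > 0"
    by (simp add: K_def add_nonneg_pos)
  have "exp (K * (x - a0)) \<le> exp ((a0 + al) * K)"
    using assms(2,4) \<open>K > 0\<close> by (simp add: mult.commute mult_left_mono)
  then have "r * (exp (K * (x - a0)) * (1 + 1 / K)) \<le> r * (exp ((a0 + al) * K) * (1 + 1 / K))"
    using \<open>r \<ge> 0\<close> \<open>K > 0\<close> by (intro mult_left_mono mult_right_mono) auto
  then show ?thesis
    using assms(2,4) by (simp add: Lmax_eq K_def algebra_simps add_divide_distrib)
qed

lemma solution_deriv_dist_le_Lmax:
  fixes G :: "(real \<times> (nat \<Rightarrow> real)) set" and f f' :: "real \<times> (nat \<Rightarrow> real) \<Rightarrow> real"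
  assumes "m \<ge> 1" and "k < m" and "L \<ge> 0" and "a0 \<ge> 0" and "r \<ge> 0"
    and lip: "\<forall>x Y Y'. (x, Y) \<in> G \<longrightarrow> (x, Y') \<in> G \<longrightarrow>
                \<bar>f (x, Y) - f (x, Y')\<bar> \<le> L * vnorm m (\<lambda>i. Y i - Y' i)"
    and close: "\<forall>p\<in>G. \<bar>f p - f' p\<bar> \<le> r"
    and D: "is_solution m f Y0 a0 al D" and D': "is_solution m f' Y0' a0 al D'"
    and graph: "\<forall>x\<in>{a0..a0+al}. (x, vec_of m D x) \<in> G"
    and graph': "\<forall>x\<in>{a0..a0+al}. (x, vec_of m D' x) \<in> G"
    and init: "vnorm m (\<lambda>i. Y0 i - Y0' i) \<le> r"
    and x: "x \<in> {a0..a0+al}"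
  shows "\<bar>D k x - D' k x\<bar> \<le> r * Lmax L a0 al"
proof -
  have "\<bar>D k x - D' k x\<bar> \<le> vnorm m (\<lambda>i. D i x - D' i x)"
    using abs_le_vnorm[OF \<open>k < m\<close>, of "\<lambda>i. D i x - D' i x"] by simp
  also have "\<dots> \<le> exp (sqrt (L\<^sup>2 + 1) * (x - a0)) * (r + r / sqrt (L\<^sup>2 + 1)) - r / sqrt (L\<^sup>2 + 1)"
    by (rule solution_dist_le[OF \<open>m \<ge> 1\<close> \<open>L \<ge> 0\<close> \<open>r \<ge> 0\<close> lip close D D' graph graph' init x])
  also have "\<dots> \<le> r * Lmax L a0 al"
    by (rule growth_le_Lmax[OF \<open>a0 \<ge> 0\<close> \<open>r \<ge> 0\<close> x])
  finally show ?thesis .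
qed

definition sup_cover :: "real \<Rightarrow> ('a \<Rightarrow> real) set \<Rightarrow> 'a set \<Rightarrow> ('a \<Rightarrow> real) set \<Rightarrow> bool" where
  "sup_cover \<delta> T S C \<longleftrightarrow> finite C \<and> C \<subseteq> T \<and> (\<forall>t\<in>T. \<exists>c\<in>C. \<forall>x\<in>S. \<bar>t x - c x\<bar> \<le> \<delta>)"

lemma covnum_eq_INF_sup_cover: "covnum \<delta> T S = (INF C \<in> {C. sup_cover \<delta> T S C}. enat (card C))"
  unfolding covnum_def sup_cover_def by (simp add: SUP_le_iff)

lemma covnum_le_card: "sup_cover \<delta> T S C \<Longrightarrow> covnum \<delta> T S \<le> enat (card C)"
  unfolding covnum_eq_INF_sup_cover by (rule INF_lower) simp

lemma covnum_attained:
  assumes "covnum \<delta> T S \<noteq> \<infinity>"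
  obtains C where "sup_cover \<delta> T S C" and "covnum \<delta> T S = enat (card C)"
proof -
  have "{C. sup_cover \<delta> T S C} \<noteq> {}"
  proof
    assume "{C. sup_cover \<delta> T S C} = {}"
    then show False
      using assms by (simp add: covnum_eq_INF_sup_cover top_enat_def)
  qed
  then have "covnum \<delta> T S \<in> (\<lambda>C. enat (card C)) ` {C. sup_cover \<delta> T S C}"
    unfolding covnum_eq_INF_sup_cover Inf_enat_def by (auto intro: LeastI)
  then show ?thesis
    using that by blast
qed

lemma one_le_covnum: "T \<noteq> {} \<Longrightarrow> 1 \<le> covnum \<delta> T S"
  unfolding covnum_eq_INF_sup_cover sup_cover_def
  by (auto intro!: INF_greatest simp: one_enat_def Suc_le_eq card_gt_0_iff)

lemma covnum_le_card_parameters: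
  assumes "finite C" and "g ` C \<subseteq> T" and "\<forall>t\<in>T. \<exists>c\<in>C. \<forall>x\<in>S. \<bar>t x - g c x\<bar> \<le> \<delta>"
  shows "covnum \<delta> T S \<le> enat (card C)"
proof -
  have "covnum \<delta> T S \<le> enat (card (g ` C))"
    using assms by (intro covnum_le_card) (auto simp: sup_cover_def)
  also have "\<dots> \<le> enat (card C)"
    using card_image_le[OF \<open>finite C\<close>] by simp
  finally show ?thesis .
qed

definition derivative_class ::
  "nat \<Rightarrow> nat \<Rightarrow> (real \<times> (nat \<Rightarrow> real) \<Rightarrow> real) set \<Rightarrow> real \<Rightarrow> real \<Rightarrow> real
    \<Rightarrow> (real \<times> (nat \<Rightarrow> real)) set \<Rightarrow> (real \<Rightarrow> real) set" where
  "derivative_class m k F C0 a0 al G = {D k | D f Y0. f \<in> F \<and> in_Rm m Y0 \<and> vnorm m Y0 \<le> C0 \<and>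
     is_solution m f Y0 a0 al D \<and> (\<forall>x\<in>{a0..a0+al}. (x, vec_of m D x) \<in> G)}"

lemma derivative_class_nonempty:
  assumes "F \<noteq> {}" and "C0 \<ge> 0"
    and exist: "\<forall>f\<in>F. \<forall>Y0. in_Rm m Y0 \<and> vnorm m Y0 \<le> C0 \<longrightarrow>
                  (\<exists>D. is_solution m f Y0 a0 al D \<and> (\<forall>x\<in>{a0..a0+al}. (x, vec_of m D x) \<in> G))"
  shows "derivative_class m k F C0 a0 al G \<noteq> {}"
proof -
  obtain f where "f \<in> F"
    using assms by blast
  moreover have "in_Rm m (\<lambda>_. 0) \<and> vnorm m (\<lambda>_. 0) \<le> C0"
    using \<open>C0 \<ge> 0\<close> by (simp add: in_Rm_def vnorm_def)
  ultimately show ?thesis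
    using exist unfolding derivative_class_def by blast
qed

lemma covnum_derivative_class_le:
  assumes "m \<ge> 1" and "k < m" and "L \<ge> 0" and "a0 \<ge> 0" and "r \<ge> 0"
    and lip: "\<forall>f\<in>F. \<forall>x Y Y'. (x, Y) \<in> G \<longrightarrow> (x, Y') \<in> G \<longrightarrow>
                  \<bar>f (x, Y) - f (x, Y')\<bar> \<le> L * vnorm m (\<lambda>i. Y i - Y' i)"
    and exist: "\<forall>f\<in>F. \<forall>Y0. in_Rm m Y0 \<and> vnorm m Y0 \<le> C0 \<longrightarrow>
                  (\<exists>D. is_solution m f Y0 a0 al D \<and> (\<forall>x\<in>{a0..a0+al}. (x, vec_of m D x) \<in> G))"
    and CF: "sup_cover r F G CF"
    and CY: "finite CY" "CY \<subseteq> {Y. in_Rm m Y \<and> vnorm m Y \<le> C0}"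
      "\<forall>Y\<in>{Y. in_Rm m Y \<and> vnorm m Y \<le> C0}. \<exists>c\<in>CY. vnorm m (\<lambda>i. Y i - c i) \<le> r"
  shows "covnum (r * Lmax L a0 al) (derivative_class m k F C0 a0 al G) {a0..a0+al}
           \<le> enat (card CF * card CY)"
proof -
  define sol where "sol f Y0 = (SOME D. is_solution m f Y0 a0 al D \<and> (\<forall>x\<in>{a0..a0+al}. (x, vec_of m D x) \<in> G))"
    for f Y0
  have sol: "is_solution m f Y0 a0 al (sol f Y0) \<and> (\<forall>x\<in>{a0..a0+al}. (x, vec_of m (sol f Y0) x) \<in> G)"
    if "f \<in> F" "in_Rm m Y0 \<and> vnorm m Y0 \<le> C0" for f Y0
  proof -
    have "\<exists>D. is_solution m f Y0 a0 al D \<and> (\<forall>x\<in>{a0..a0+al}. (x, vec_of m D x) \<in> G)"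
      using exist that by blast
    then show ?thesis
      unfolding sol_def by (rule someI_ex)
  qed
  have "covnum (r * Lmax L a0 al) (derivative_class m k F C0 a0 al G) {a0..a0+al} \<le> enat (card (CF \<times> CY))"
  proof (rule covnum_le_card_parameters)
    show "finite (CF \<times> CY)"
      using CF CY by (simp add: sup_cover_def)
    show "(\<lambda>(f, Y0). sol f Y0 k) ` (CF \<times> CY) \<subseteq> derivative_class m k F C0 a0 al G"
    proof clarify
      fix f Y0 assume "f \<in> CF" "Y0 \<in> CY"
      then have "f \<in> F" "in_Rm m Y0 \<and> vnorm m Y0 \<le> C0"
        using CF CY by (auto simp: sup_cover_def)
      then show "sol f Y0 k \<in> derivative_class m k F C0 a0 al G"
        using sol unfolding derivative_class_def by blast
    qed
    show "\<forall>t\<in>derivative_class m k F C0 a0 al G. \<exists>c\<in>CF \<times> CY. \<forall>x\<in>{a0..a0+al}.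
        \<bar>t x - (case c of (f, Y0) \<Rightarrow> sol f Y0 k) x\<bar> \<le> r * Lmax L a0 al"
    proof (clarsimp simp: derivative_class_def)
      fix D f Y0 assume f: "f \<in> F" and Y0: "in_Rm m Y0" "vnorm m Y0 \<le> C0"
        and D: "is_solution m f Y0 a0 al D" "\<forall>x\<in>{a0..a0+al}. (x, vec_of m D x) \<in> G"
      obtain f' where f': "f' \<in> CF" "\<forall>p\<in>G. \<bar>f p - f' p\<bar> \<le> r"
        using CF f unfolding sup_cover_def by blast
      obtain Y0' where Y0': "Y0' \<in> CY" "vnorm m (\<lambda>i. Y0 i - Y0' i) \<le> r"
        using CY Y0 by blast
      have "f' \<in> F" "in_Rm m Y0' \<and> vnorm m Y0' \<le> C0"
        using CF CY f' Y0' by (auto simp: sup_cover_def)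
      note sol' = sol[OF this, THEN conjunct1] sol[OF this, THEN conjunct2]
      have "\<forall>x\<in>{a0..a0+al}. \<bar>D k x - sol f' Y0' k x\<bar> \<le> r * Lmax L a0 al"
        using lip f by (intro ballI solution_deriv_dist_le_Lmax[OF \<open>m \<ge> 1\<close> \<open>k < m\<close> \<open>L \<ge> 0\<close> \<open>a0 \<ge> 0\<close>
            \<open>r \<ge> 0\<close> _ f'(2) D(1) sol'(1) D(2) sol'(2) Y0'(2)]) blast+
      then show "\<exists>f'\<in>CF. \<exists>Y0'\<in>CY. \<forall>x\<in>{a0..a0+al}. \<bar>D k x - sol f' Y0' k x\<bar> \<le> r * Lmax L a0 al"
        using f' Y0' by blast
    qed
  qed
  then show ?thesis
    by (simp add: card_cartesian_product)
qed

lemma ln_le_ln_factor_bound: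
  fixes N A B :: nat
  assumes "1 \<le> N" and "N \<le> A * B" and "real B \<le> X"
  shows "ln (real N) \<le> ln (real A) + ln X"
proof -
  have "A * B \<noteq> 0"
    using assms(1,2) by linarith
  then have "A \<ge> 1" "B \<ge> 1"
    by auto
  have "ln (real N) \<le> ln (real A * real B)"
    using assms(1,2) by (simp only: of_nat_mult[symmetric] ln_le_cancel_iff of_nat_le_iff of_nat_0_less_iff)
  also have "\<dots> = ln (real A) + ln (real B)"
    using \<open>A \<ge> 1\<close> \<open>B \<ge> 1\<close> by (simp add: ln_mult)
  also have "ln (real B) \<le> ln X"
    using \<open>B \<ge> 1\<close> assms(3) by simp
  finally show ?thesis
    by simp
qed

lemma ln_covnum_derivative_class_le:
  assumes "m \<ge> 1" and "k < m" and "L \<ge> 0" and "a0 \<ge> 0" and "r > 0" and "C0 \<ge> 0" and "F \<noteq> {}"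
    and lip: "\<forall>f\<in>F. \<forall>x Y Y'. (x, Y) \<in> G \<longrightarrow> (x, Y') \<in> G \<longrightarrow>
                  \<bar>f (x, Y) - f (x, Y')\<bar> \<le> L * vnorm m (\<lambda>i. Y i - Y' i)"
    and exist: "\<forall>f\<in>F. \<forall>Y0. in_Rm m Y0 \<and> vnorm m Y0 \<le> C0 \<longrightarrow>
                  (\<exists>D. is_solution m f Y0 a0 al D \<and> (\<forall>x\<in>{a0..a0+al}. (x, vec_of m D x) \<in> G))"
    and CF: "sup_cover r F G CF"
  defines "N \<equiv> covnum (r * Lmax L a0 al) (derivative_class m k F C0 a0 al G) {a0..a0+al}"
  shows "N \<noteq> \<infinity> \<and> ln (real (the_enat N)) \<le> ln (real (card CF)) + real m * ln (2 * C0 / r + 1)"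
proof -
  let ?B = "{Y. in_Rm m Y \<and> vnorm m Y \<le> C0}"
  have "\<exists>P. finite P \<and> P \<subseteq> ?B \<and> (\<forall>Y\<in>?B. \<exists>c\<in>P. vnorm m (\<lambda>i. Y i - c i) \<le> r)
      \<and> real (card P) \<le> (2 * C0 / r + 1) ^ m"
    using \<open>C0 \<ge> 0\<close> by (intro bounded_set_has_small_cover[OF \<open>r > 0\<close>]) auto
  then obtain CY where CY: "finite CY" "CY \<subseteq> ?B" "\<forall>Y\<in>?B. \<exists>c\<in>CY. vnorm m (\<lambda>i. Y i - c i) \<le> r"
    and CY_card: "real (card CY) \<le> (2 * C0 / r + 1) ^ m"
    by blast
  have "N \<le> enat (card CF * card CY)"
    unfolding N_def using assms(1-5) lip exist CF CY
    by (intro covnum_derivative_class_le) auto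
  moreover have "1 \<le> N"
    unfolding N_def using assms(6,7) exist by (intro one_le_covnum derivative_class_nonempty)
  ultimately obtain n where n: "N = enat n" "1 \<le> n" "n \<le> card CF * card CY"
    by (cases N) (auto simp: one_enat_def)
  have "ln (real n) \<le> ln (real (card CF)) + ln ((2 * C0 / r + 1) ^ m)"
    using ln_le_ln_factor_bound[OF n(2,3) CY_card] .
  then show ?thesis
    using n(1) \<open>r > 0\<close> \<open>C0 \<ge> 0\<close> by (simp add: ln_realpow add_pos_nonneg)
qed

theorem theorem2p1:
  fixes m :: nat and a0 a b C0 L M :: real
    and F :: "(real \<times> (nat \<Rightarrow> real) \<Rightarrow> real) set"
  assumes m: "m \<ge> 1"
    and a0: "a0 \<ge> 0" and a: "a > 0" and b: "b > 0" and C0: "C0 > 0" and L: "L \<ge> 0" and M: "M > 0"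
    and F_cont: "\<forall>f\<in>F. continuous_on (Gamma_bar m a0 a b C0) f"
    and F_bound: "\<forall>f\<in>F. \<forall>p\<in>Gamma_bar m a0 a b C0. \<bar>f p\<bar> \<le> M"
    and F_lip: "\<forall>f\<in>F. \<forall>x Y Y'. (x, Y) \<in> Gamma_bar m a0 a b C0 \<longrightarrow> (x, Y') \<in> Gamma_bar m a0 a b C0 \<longrightarrow>
                  \<bar>f (x, Y) - f (x, Y')\<bar> \<le> L * vnorm m (\<lambda>i. Y i - Y' i)"
    and exist: "\<forall>f\<in>F. \<forall>Y0. in_Rm m Y0 \<and> vnorm m Y0 \<le> C0 \<longrightarrow>
                  (\<exists>D. is_solution m f Y0 a0 (min a (b / M)) D \<and>
                       (\<forall>x\<in>{a0..a0 + min a (b / M)}. (x, vec_of m D x) \<in> Gamma_bar m a0 a b C0))"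
    and F_ne: "F \<noteq> {}"
    and F_fin: "covnum (\<delta> / Lmax L a0 (min a (b / M))) F (Gamma_bar m a0 a b C0) \<noteq> \<infinity>"
    and delta: "\<delta> > 0"
    and k: "k < m"
  shows "covnum \<delta> {D k | D f Y0. f \<in> F \<and> in_Rm m Y0 \<and> vnorm m Y0 \<le> C0 \<and>
                 is_solution m f Y0 a0 (min a (b / M)) D \<and>
                 (\<forall>x\<in>{a0..a0 + min a (b / M)}. (x, vec_of m D x) \<in> Gamma_bar m a0 a b C0)}
                {a0..a0 + min a (b / M)} \<noteq> \<infinity>
       \<and> ln (real (the_enat (covnum \<delta> {D k | D f Y0. f \<in> F \<and> in_Rm m Y0 \<and> vnorm m Y0 \<le> C0 \<and>
                 is_solution m f Y0 a0 (min a (b / M)) D \<and>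
                 (\<forall>x\<in>{a0..a0 + min a (b / M)}. (x, vec_of m D x) \<in> Gamma_bar m a0 a b C0)}
                {a0..a0 + min a (b / M)})))
         \<le> ln (real (the_enat (covnum (\<delta> / Lmax L a0 (min a (b / M))) F (Gamma_bar m a0 a b C0))))
           + real m * ln (2 * C0 * Lmax L a0 (min a (b / M)) / \<delta> + 1)"
proof -
  define al where "al = min a (b / M)"
  define G where "G = Gamma_bar m a0 a b C0"
  define r where "r = \<delta> / Lmax L a0 al"
  have "Lmax L a0 al \<ge> 1"
    using a0 a b M by (intro one_le_Lmax) (auto simp: al_def)
  then have "r > 0" and \<delta>: "\<delta> = r * Lmax L a0 al" and "2 * C0 * Lmax L a0 al / \<delta> = 2 * C0 / r"
    using delta by (auto simp: r_def)
  have "covnum r F G \<noteq> \<infinity>"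
    using F_fin by (simp add: r_def al_def G_def)
  then obtain CF where "sup_cover r F G CF" and "covnum r F G = enat (card CF)"
    by (rule covnum_attained)
  moreover have "covnum \<delta> (derivative_class m k F C0 a0 al G) {a0..a0+al} \<noteq> \<infinity> \<and>
      ln (real (the_enat (covnum \<delta> (derivative_class m k F C0 a0 al G) {a0..a0+al})))
        \<le> ln (real (card CF)) + real m * ln (2 * C0 / r + 1)"
    unfolding \<delta> using m k L a0 \<open>r > 0\<close> C0 F_ne F_lip exist \<open>sup_cover r F G CF\<close>
    by (intro ln_covnum_derivative_class_le) (auto simp: al_def G_def)
  ultimately show ?thesis
    using \<open>2 * C0 * Lmax L a0 al / \<delta> = 2 * C0 / r\<close>
    by (simp add: derivative_class_def al_def G_def r_def)
qed

end
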